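(* Let $d\ge2$, $A\in\mathbb R^{m,m}$, $f\in C^1(\mathbb R^m,\mathbb R^m)$, $S\in\mathbb R^{d,d}$ skew-symmetric, and let $U\in\mathbb C^{d,d}$ be unitary with $U^HSU=\Lambda_S=\operatorname{diag}(\lambda_1^S,\dots,\lambda_d^S)$, where $\lambda_1^S,\dots,\lambda_d^S$ are the eigenvalues of $S$. Let $v_\star\in C^3(\mathbb R^d,\mathbb R^m)$ be a classical solution of $A\Delta v_\star(x)+\langle Sx,\nabla v_\star(x)\rangle+f(v_\star(x))=0$, $x\in\mathbb R^d$. Then $v(x)=Dv_\star(x)(Ex+b)$, $x\in\mathbb R^d$, is a classical solution of $\lambda v-\mathcal Lv=0$ on $\mathbb R^d$, where $\mathcal Lv(x)=A\Delta v(x)+\langle Sx,\nabla v(x)\rangle+Df(v_\star(x))v(x)$, whenever either (i) $\lambda=-\lambda_l^S$, $E=0$, $b=Ue_l$ for some $l\in\{1,\dots,d\}$, or (ii) $\lambda=-(\lambda_i^S+\lambda_j^S)$, $E=U(I_{ij}-I_{ji})U^\top$, $b=0$ for some $1\le i<j\le d$. All these values $\lambda$ lie on the imaginary axis.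
   Context: For $x\in\mathbb R^d$, $\langle Sx,\nabla v(x)\rangle=\sum_{i,j=1}^dS_{ij}x_j\partial_{x_i}v(x)$. $e_l$ denotes the $l$-th standard unit vector of $\mathbb C^d$, and $I_{ij}=e_ie_j^\top\in\mathbb R^{d,d}$ is the matrix with entry $1$ in row $i$, column $j$ and $0$ elsewhere. $Dv_\star(x)\in\mathbb R^{m,d}$ is the Jacobian of $v_\star$ at $x$. *)

theory Defs
  imports "HOL-Analysis.Analysis"
begin

definition partial :: "('a::real_normed_vector \<Rightarrow> 'b::real_normed_vector) \<Rightarrow> 'a \<Rightarrow> 'a \<Rightarrow> 'b" where
  "partial g e x = frechet_derivative g (at x) e"

fun Ck :: "nat \<Rightarrow> ('a::euclidean_space \<Rightarrow> 'b::real_normed_vector) \<Rightarrow> bool" where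
  "Ck 0 g = continuous_on UNIV g"
| "Ck (Suc k) g = ((\<forall>x. g differentiable (at x)) \<and> continuous_on UNIV g \<and>
      (\<forall>i\<in>Basis. Ck k (partial g i)))"

definition laplacian :: "(real^'d \<Rightarrow> 'b::real_normed_vector) \<Rightarrow> real^'d \<Rightarrow> 'b" where
  "laplacian g x = (\<Sum>i\<in>UNIV. partial (partial g (axis i 1)) (axis i 1) x)"

text \<open>The drift term  <Sx, grad g(x)> = sum_{i,j} S_ij x_j d_i g(x).\<close>
definition drift :: "real^'d^'d \<Rightarrow> (real^'d \<Rightarrow> 'b::real_normed_vector) \<Rightarrow> real^'d \<Rightarrow> 'b" where
  "drift S g x = (\<Sum>i\<in>UNIV. \<Sum>j\<in>UNIV. (S$i$j * x$j) *\<^sub>R partial g (axis i 1) x)"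

definition jac :: "(real^'n \<Rightarrow> real^'m) \<Rightarrow> real^'n \<Rightarrow> real^'n^'m" where
  "jac g y = (\<chi> i j. (frechet_derivative g (at y) (axis j 1)) $ i)"

definition cmat :: "real^'n^'m \<Rightarrow> complex^'n^'m" where
  "cmat M = (\<chi> i j. complex_of_real (M$i$j))"

definition cvec :: "real^'n \<Rightarrow> complex^'n" where
  "cvec x = (\<chi> i. complex_of_real (x$i))"

definition ctranspose :: "complex^'n^'m \<Rightarrow> complex^'m^'n" where
  "ctranspose M = (\<chi> i j. cnj (M$j$i))"

definition diag :: "('n \<Rightarrow> complex) \<Rightarrow> complex^'n^'n" where
  "diag l = (\<chi> i j. if i = j then l i else 0)"

definition unitary :: "complex^'n^'n \<Rightarrow> bool" where
  "unitary U \<longleftrightarrow> ctranspose U ** U = mat 1"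

definition skew_symmetric :: "real^'n^'n \<Rightarrow> bool" where
  "skew_symmetric S \<longleftrightarrow> transpose S = - S"

definition Imat :: "'n \<Rightarrow> 'n \<Rightarrow> complex^'n^'n" where
  "Imat i j = (\<chi> k l. if k = i \<and> l = j then 1 else 0)"

definition vfun :: "(real^'d \<Rightarrow> real^'m) \<Rightarrow> complex^'d^'d \<Rightarrow> complex^'d \<Rightarrow> real^'d \<Rightarrow> complex^'m" where
  "vfun vs E b x = cmat (jac vs x) *v (E *v cvec x + b)"

definition Lop :: "real^'m^'m \<Rightarrow> real^'d^'d \<Rightarrow> (real^'m \<Rightarrow> real^'m) \<Rightarrow> (real^'d \<Rightarrow> real^'m)
     \<Rightarrow> (real^'d \<Rightarrow> complex^'m) \<Rightarrow> real^'d \<Rightarrow> complex^'m" where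
  "Lop A S f vs v x = cmat A *v laplacian v x + drift S v x + cmat (jac f (vs x)) *v v x"

definition classical_eig_solution where
  "classical_eig_solution A S f vs lam v \<longleftrightarrow>
     Ck 2 v \<and> (\<forall>x. lam *s v x - Lop A S f vs v x = 0)"

end

theory Submission
  imports Defs
begin

text \<open>Differentiating the equation for \<open>v\<^sub>\<star>\<close> in the direction \<open>x\<^sub>j\<close> (and commuting derivatives
  by Schwarz's theorem) shows that \<open>\<partial>\<^sub>j v\<^sub>\<star>\<close> solves the linearized equation
  \<open>\<L> \<partial>\<^sub>j v\<^sub>\<star> = - \<Sum>\<^sub>k S\<^sub>k\<^sub>j \<partial>\<^sub>k v\<^sub>\<star>\<close>, the right-hand side coming from the rotating drift.
  For \<open>v = Dv\<^sub>\<star>(Ex + b)\<close> with \<open>E\<close> skew this yields \<open>\<L>v = Dv\<^sub>\<star>((E S - S E) x - S b)\<close>, so \<open>v\<close>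
  is an eigenfunction with eigenvalue \<open>\<lambda>\<close> as soon as \<open>E S - S E = \<lambda> E\<close> and \<open>S b = - \<lambda> b\<close>.
  The two choices in the theorem satisfy these relations by \<open>S U = U \<Lambda>\<close>, and the eigenvalues of the
  real skew-symmetric \<open>S\<close> are imaginary.\<close>

lemma partial_eqI: "(g has_derivative D) (at x) \<Longrightarrow> partial g e x = D e"
  unfolding partial_def by (metis frechet_derivative_at)

lemma differentiable_bounded_linear:
  "bounded_linear L \<Longrightarrow> g differentiable (at x) \<Longrightarrow> (\<lambda>y. L (g y)) differentiable (at x)"
  unfolding differentiable_def by (blast intro: bounded_linear.has_derivative)

lemma partial_bounded_linear:
  assumes "bounded_linear L" and "g differentiable (at x)"
  shows "partial (\<lambda>y. L (g y)) e x = L (partial g e x)"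
  using partial_eqI[OF bounded_linear.has_derivative[OF assms(1)
      frechet_derivative_works[THEN iffD1, OF assms(2)]]]
  by (simp add: partial_def[of g])

lemma partial_add:
  assumes "g differentiable (at x)" and "h differentiable (at x)"
  shows "partial (\<lambda>y. g y + h y) e x = partial g e x + partial h e x"
  using partial_eqI[OF has_derivative_add[OF frechet_derivative_works[THEN iffD1, OF assms(1)]
      frechet_derivative_works[THEN iffD1, OF assms(2)]]]
  by (simp add: partial_def[of g] partial_def[of h])

lemma partial_sum:
  assumes "\<And>j. j \<in> J \<Longrightarrow> g j differentiable (at x)"
  shows "partial (\<lambda>y. \<Sum>j\<in>J. g j y) e x = (\<Sum>j\<in>J. partial (g j) e x)"
proof -
  have "((\<lambda>y. \<Sum>j\<in>J. g j y) has_derivative (\<lambda>h. \<Sum>j\<in>J. frechet_derivative (g j) (at x) h)) (at x)"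
    using assms by (intro has_derivative_sum) (simp add: frechet_derivative_works[symmetric])
  from partial_eqI[OF this] show ?thesis by (simp add: partial_def[of "g _"])
qed

lemma partial_bilinear:
  fixes prod :: "'b::real_normed_vector \<Rightarrow> 'c::real_normed_vector \<Rightarrow> 'd::real_normed_vector"
    and g :: "'a::real_normed_vector \<Rightarrow> 'b"
  assumes "bounded_bilinear prod" and "g differentiable (at x)" and "h differentiable (at x)"
  shows "partial (\<lambda>y. prod (g y) (h y)) e x = prod (partial g e x) (h x) + prod (g x) (partial h e x)"
  using partial_eqI[OF bounded_bilinear.FDERIV[OF assms(1)
      frechet_derivative_works[THEN iffD1, OF assms(2)] frechet_derivative_works[THEN iffD1, OF assms(3)]]]
  by (simp add: partial_def[of g] partial_def[of h] add.commute)

lemma differentiable_bilinear: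
  fixes prod :: "'b::real_normed_vector \<Rightarrow> 'c::real_normed_vector \<Rightarrow> 'e::real_normed_vector"
    and g :: "'a::real_normed_vector \<Rightarrow> 'b"
  shows "bounded_bilinear prod \<Longrightarrow> g differentiable (at x) \<Longrightarrow> h differentiable (at x)
    \<Longrightarrow> (\<lambda>y. prod (g y) (h y)) differentiable (at x)"
  unfolding differentiable_def by (blast intro: bounded_bilinear.FDERIV)

lemma partial_compose:
  assumes "g differentiable (at x)" and "f differentiable (at (g x))"
  shows "partial (\<lambda>y. f (g y)) e x = frechet_derivative f (at (g x)) (partial g e x)"
  using partial_eqI[OF has_derivative_compose[OF frechet_derivative_works[THEN iffD1, OF assms(1)]
      frechet_derivative_works[THEN iffD1, OF assms(2)]]]
  by (simp add: partial_def[of g] o_def)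

lemma partial_linear: "bounded_linear L \<Longrightarrow> partial L e x = L e"
  by (rule partial_eqI[OF bounded_linear_imp_has_derivative])

lemma partial_affine:
  assumes "bounded_linear L"
  shows "partial (\<lambda>y. L y + c) e x = L e"
  using has_derivative_add_const[OF bounded_linear_imp_has_derivative[OF assms], of c]
  by (rule partial_eqI)

section \<open>Symmetry of second derivatives\<close>

lemma has_real_derivative_along_line:
  fixes g :: "'a::real_normed_vector \<Rightarrow> real^'m"
  assumes "g differentiable (at (p + s *\<^sub>R u))"
  shows "((\<lambda>s. g (p + s *\<^sub>R u) $ i) has_real_derivative partial g u (p + s *\<^sub>R u) $ i) (at s)"
proof -
  let ?D = "frechet_derivative g (at (p + s *\<^sub>R u))"
  have "((\<lambda>s. p + s *\<^sub>R u) has_derivative (\<lambda>h. h *\<^sub>R u)) (at s)"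
    by (auto intro!: derivative_eq_intros)
  from has_derivative_compose[OF this frechet_derivative_works[THEN iffD1, OF assms]]
  have "((\<lambda>s. g (p + s *\<^sub>R u)) has_derivative (\<lambda>h. ?D (h *\<^sub>R u))) (at s)"
    by (simp add: o_def)
  then have "((\<lambda>s. g (p + s *\<^sub>R u) $ i) has_derivative (\<lambda>h. ?D (h *\<^sub>R u) $ i)) (at s)"
    by (rule bounded_linear.has_derivative[OF bounded_linear_vec_nth])
  moreover have "linear ?D"
    using assms frechet_derivative_works has_derivative_linear by blast
  ultimately show ?thesis
    by (simp add: has_field_derivative_def partial_def linear_scale mult.commute[of _ "?D u $ i"])
qed

lemma second_difference_eq:
  fixes g :: "'a::real_normed_vector \<Rightarrow> real^'m"
  assumes dg: "\<And>y. g differentiable (at y)" and dgu: "\<And>y. partial g u differentiable (at y)"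
    and h: "h > 0"
  obtains \<sigma> \<tau> where "0 < \<sigma>" "\<sigma> < h" "0 < \<tau>" "\<tau> < h"
    "g (x + h *\<^sub>R u + h *\<^sub>R w) $ i - g (x + h *\<^sub>R u) $ i - g (x + h *\<^sub>R w) $ i + g x $ i
       = h\<^sup>2 * partial (partial g u) w (x + \<sigma> *\<^sub>R u + \<tau> *\<^sub>R w) $ i"
proof -
  define \<phi> where "\<phi> s = g ((x + h *\<^sub>R w) + s *\<^sub>R u) $ i - g (x + s *\<^sub>R u) $ i" for s
  define \<phi>' where "\<phi>' s = partial g u ((x + h *\<^sub>R w) + s *\<^sub>R u) $ i - partial g u (x + s *\<^sub>R u) $ i" for s
  have "DERIV \<phi> s :> \<phi>' s" for s
    unfolding \<phi>_def \<phi>'_def by (intro DERIV_diff has_real_derivative_along_line dg)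
  then obtain \<sigma> where \<sigma>: "0 < \<sigma>" "\<sigma> < h" and "\<phi> h - \<phi> 0 = (h - 0) * \<phi>' \<sigma>"
    using MVT2[OF h, of \<phi> \<phi>'] by blast
  moreover have "x + h *\<^sub>R w + \<sigma> *\<^sub>R u = (x + \<sigma> *\<^sub>R u) + h *\<^sub>R w"
    by (simp add: algebra_simps)
  ultimately have \<phi>_diff: "\<phi> h - \<phi> 0
      = h * (partial g u ((x + \<sigma> *\<^sub>R u) + h *\<^sub>R w) $ i - partial g u (x + \<sigma> *\<^sub>R u) $ i)"
    unfolding \<phi>'_def by simp
  define \<psi> where "\<psi> t = partial g u ((x + \<sigma> *\<^sub>R u) + t *\<^sub>R w) $ i" for t
  define \<psi>' where "\<psi>' t = partial (partial g u) w ((x + \<sigma> *\<^sub>R u) + t *\<^sub>R w) $ i" for t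
  have "DERIV \<psi> t :> \<psi>' t" for t
    unfolding \<psi>_def \<psi>'_def by (intro has_real_derivative_along_line dgu)
  then obtain \<tau> where \<tau>: "0 < \<tau>" "\<tau> < h" and "\<psi> h - \<psi> 0 = (h - 0) * \<psi>' \<tau>"
    using MVT2[OF h, of \<psi> \<psi>'] by blast
  with \<phi>_diff have "\<phi> h - \<phi> 0 = h\<^sup>2 * partial (partial g u) w (x + \<sigma> *\<^sub>R u + \<tau> *\<^sub>R w) $ i"
    unfolding \<psi>_def \<psi>'_def by (simp add: power2_eq_square)
  moreover have "\<phi> h - \<phi> 0 = g (x + h *\<^sub>R u + h *\<^sub>R w) $ i - g (x + h *\<^sub>R u) $ i - g (x + h *\<^sub>R w) $ i + g x $ i"
    unfolding \<phi>_def by (simp add: algebra_simps)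
  ultimately show ?thesis using that \<sigma> \<tau> by metis
qed

lemma continuous_on_component_eps:
  fixes F :: "'a::metric_space \<Rightarrow> real^'m"
  assumes "continuous_on UNIV F" and "e > 0"
  obtains d where "d > 0" "\<And>y. dist y x < d \<Longrightarrow> \<bar>F y $ i - F x $ i\<bar> < e"
proof -
  obtain d where "d > 0" and d: "\<And>y. dist y x < d \<Longrightarrow> dist (F y) (F x) < e"
    using assms unfolding continuous_on_iff by blast
  show thesis
  proof (rule that[OF \<open>d > 0\<close>])
    fix y
    assume "dist y x < d"
    then have "dist (F y $ i) (F x $ i) < e"
      using d dist_vec_nth_le order.strict_trans1 by blast
    then show "\<bar>F y $ i - F x $ i\<bar> < e" by (simp add: dist_real_def)
  qed
qed

text \<open>Schwarz: both mixed partials at \<open>x\<close> are limits of the same second difference quotient,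
  evaluated at intermediate points that tend to \<open>x\<close>.\<close>
theorem partial_commute:
  fixes g :: "'a::real_normed_vector \<Rightarrow> real^'m"
  assumes dg: "\<And>y. g differentiable (at y)"
    and du: "\<And>y. partial g u differentiable (at y)" and dw: "\<And>y. partial g w differentiable (at y)"
    and cuw: "continuous_on UNIV (partial (partial g u) w)"
    and cwu: "continuous_on UNIV (partial (partial g w) u)"
  shows "partial (partial g u) w = partial (partial g w) u"
proof (rule ext, rule iffD2[OF vec_eq_iff], rule allI, rule ccontr)
  fix x i
  let ?C1 = "\<lambda>y. partial (partial g u) w y $ i"
  let ?C2 = "\<lambda>y. partial (partial g w) u y $ i"
  assume ne: "?C1 x \<noteq> ?C2 x"
  define e where "e = \<bar>?C1 x - ?C2 x\<bar> / 2"
  have "e > 0" using ne unfolding e_def by simp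
  obtain d1 where "d1 > 0" and d1: "\<And>y. dist y x < d1 \<Longrightarrow> \<bar>?C1 y - ?C1 x\<bar> < e"
    using continuous_on_component_eps[OF cuw \<open>e > 0\<close>] by blast
  obtain d2 where "d2 > 0" and d2: "\<And>y. dist y x < d2 \<Longrightarrow> \<bar>?C2 y - ?C2 x\<bar> < e"
    using continuous_on_component_eps[OF cwu \<open>e > 0\<close>] by blast
  define h where "h = min d1 d2 / (norm u + norm w + 1)"
  have "norm u + norm w + 1 > 0"
    using norm_ge_zero[of u] norm_ge_zero[of w] by linarith
  then have "h > 0" and h_scaled: "h * (norm u + norm w + 1) = min d1 d2"
    using \<open>d1 > 0\<close> \<open>d2 > 0\<close> unfolding h_def by simp_all
  have near: "dist (x + a *\<^sub>R p + b *\<^sub>R q) x < min d1 d2"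
    if "0 < a" "a < h" "0 < b" "b < h" "norm p + norm q = norm u + norm w" for a b p q
  proof -
    have "dist (x + a *\<^sub>R p + b *\<^sub>R q) x \<le> a * norm p + b * norm q"
      using that by (simp add: dist_norm norm_triangle_le)
    also have "\<dots> \<le> h * norm p + h * norm q"
      using that by (intro add_mono mult_right_mono) auto
    also have "\<dots> < h * (norm u + norm w + 1)"
      using that(5) \<open>h > 0\<close> by (simp add: distrib_left[symmetric])
    finally show ?thesis using h_scaled by simp
  qed
  obtain s1 t1 where st1: "0 < s1" "s1 < h" "0 < t1" "t1 < h"
    "g (x + h *\<^sub>R u + h *\<^sub>R w) $ i - g (x + h *\<^sub>R u) $ i - g (x + h *\<^sub>R w) $ i + g x $ i
       = h\<^sup>2 * ?C1 (x + s1 *\<^sub>R u + t1 *\<^sub>R w)"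
    using second_difference_eq[OF dg du \<open>h > 0\<close>] by blast
  obtain s2 t2 where st2: "0 < s2" "s2 < h" "0 < t2" "t2 < h"
    "g (x + h *\<^sub>R w + h *\<^sub>R u) $ i - g (x + h *\<^sub>R w) $ i - g (x + h *\<^sub>R u) $ i + g x $ i
       = h\<^sup>2 * ?C2 (x + s2 *\<^sub>R w + t2 *\<^sub>R u)"
    using second_difference_eq[OF dg dw \<open>h > 0\<close>] by blast
  have "x + h *\<^sub>R w + h *\<^sub>R u = x + h *\<^sub>R u + h *\<^sub>R w" by (simp add: algebra_simps)
  with st1(5) st2(5) have "h\<^sup>2 * ?C1 (x + s1 *\<^sub>R u + t1 *\<^sub>R w) = h\<^sup>2 * ?C2 (x + s2 *\<^sub>R w + t2 *\<^sub>R u)"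
    by (simp add: algebra_simps)
  with \<open>h > 0\<close> have "?C1 (x + s1 *\<^sub>R u + t1 *\<^sub>R w) = ?C2 (x + s2 *\<^sub>R w + t2 *\<^sub>R u)"
    by simp
  moreover have "\<bar>?C1 (x + s1 *\<^sub>R u + t1 *\<^sub>R w) - ?C1 x\<bar> < e"
    using d1 near[OF st1(1-4), of u w] by simp
  moreover have "\<bar>?C2 (x + s2 *\<^sub>R w + t2 *\<^sub>R u) - ?C2 x\<bar> < e"
    using d2 near[OF st2(1-4), of w u] by (simp add: add.commute)
  ultimately have "\<bar>?C1 x - ?C2 x\<bar> < 2 * e" by linarith
  then show False unfolding e_def by simp
qed

lemma Ck_Suc_imp_Ck:
  fixes g :: "'a::euclidean_space \<Rightarrow> 'b::real_normed_vector"
  shows "Ck (Suc k) g \<Longrightarrow> Ck k g"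
  by (induction k arbitrary: g) auto

lemma Ck_const: "Ck k (\<lambda>y::'a::euclidean_space. c)"
proof (induction k arbitrary: c)
  case (Suc k)
  have "partial (\<lambda>y::'a. c) e = (\<lambda>y. 0)" for e
    using partial_eqI[OF has_derivative_const] by blast
  then show ?case using Suc by simp
qed simp

lemma Ck_add: "Ck k g \<Longrightarrow> Ck k h \<Longrightarrow> Ck k (\<lambda>y. g y + h y)"
proof (induction k arbitrary: g h)
  case (Suc k)
  then have "partial (\<lambda>y. g y + h y) e = (\<lambda>y. partial g e y + partial h e y)" for e
    by (simp add: partial_add fun_eq_iff)
  with Suc show ?case by (simp add: continuous_on_add)
qed (simp add: continuous_on_add)

lemma Ck_sum: "finite J \<Longrightarrow> (\<And>j. j \<in> J \<Longrightarrow> Ck k (g j)) \<Longrightarrow> Ck k (\<lambda>y. \<Sum>j\<in>J. g j y)"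
  by (induction J rule: finite_induct) (simp_all add: Ck_const Ck_add)

lemma Ck_linear: "bounded_linear L \<Longrightarrow> Ck k L"
proof (induction k)
  case (Suc k)
  have "partial L e = (\<lambda>y. L e)" for e
    using partial_linear[OF Suc.prems] by blast
  with Suc.prems show ?case
    by (simp add: Ck_const linear_continuous_on bounded_linear_imp_differentiable)
qed (simp add: linear_continuous_on)

lemma Ck_bilinear:
  fixes prod :: "'b::real_normed_vector \<Rightarrow> 'c::real_normed_vector \<Rightarrow> 'd::real_normed_vector"
    and g :: "'a::euclidean_space \<Rightarrow> 'b"
  assumes "bounded_bilinear prod"
  shows "Ck k g \<Longrightarrow> Ck k h \<Longrightarrow> Ck k (\<lambda>y. prod (g y) (h y))"
proof (induction k arbitrary: g h)
  case 0
  then show ?case by (simp add: bounded_bilinear.continuous_on[OF assms])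
next
  case (Suc k)
  have "(\<lambda>y. prod (g y) (h y)) differentiable (at x)" for x
    using Suc.prems by (simp add: differentiable_bilinear[OF assms])
  moreover have "partial (\<lambda>y. prod (g y) (h y)) e
      = (\<lambda>y. prod (partial g e y) (h y) + prod (g y) (partial h e y))" for e
    using Suc.prems by (simp add: partial_bilinear[OF assms] fun_eq_iff)
  moreover have "Ck k (\<lambda>y. prod (partial g e y) (h y) + prod (g y) (partial h e y))" if "e \<in> Basis" for e
    using Suc that by (intro Ck_add Suc.IH) (simp_all add: Ck_Suc_imp_Ck[of k g] Ck_Suc_imp_Ck[of k h])
  ultimately show ?case
    using Suc.prems by (simp add: bounded_bilinear.continuous_on[OF assms])
qed

lemma Ck2_partial_commute:
  fixes g :: "'a::euclidean_space \<Rightarrow> real^'m"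
  assumes "Ck 2 g" and "u \<in> Basis" and "w \<in> Basis"
  shows "partial (partial g u) w = partial (partial g w) u"
  using assms by (intro partial_commute) (simp_all add: numeral_2_eq_2)

lemma drift_eq_partial:
  fixes g :: "real^'d \<Rightarrow> 'b::real_normed_vector"
  assumes "g differentiable (at x)"
  shows "drift S g x = partial g (S *v x) x"
proof -
  have lin: "linear (frechet_derivative g (at x))"
    using assms frechet_derivative_works has_derivative_linear by blast
  have "partial g (S *v x) x = partial g (\<Sum>k\<in>UNIV. (S *v x) $ k *\<^sub>R axis k 1) x"
    using basis_expansion[of "S *v x"] by (simp add: scalar_mult_eq_scaleR)
  also have "\<dots> = (\<Sum>k\<in>UNIV. (S *v x) $ k *\<^sub>R partial g (axis k 1) x)"
    unfolding partial_def using lin by (simp add: linear_sum linear_scale)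
  also have "\<dots> = drift S g x"
    by (simp add: drift_def matrix_vector_mult_def scaleR_sum_left)
  finally show ?thesis ..
qed

lemma Ck_laplacian:
  fixes g :: "real^'d \<Rightarrow> 'b::real_normed_vector"
  assumes "Ck (Suc (Suc k)) g"
  shows "Ck k (laplacian g)"
proof -
  have "laplacian g = (\<lambda>y. \<Sum>i\<in>UNIV. partial (partial g (axis i 1)) (axis i 1) y)"
    by (simp add: fun_eq_iff laplacian_def)
  then show ?thesis
    using assms by (simp add: Ck_sum)
qed

lemma Ck_drift:
  fixes g :: "real^'d \<Rightarrow> 'b::real_normed_vector"
  assumes "Ck (Suc k) g"
  shows "Ck k (drift S g)"
proof -
  have "drift S g = (\<lambda>y. \<Sum>i\<in>UNIV. \<Sum>j\<in>UNIV. (S$i$j * y$j) *\<^sub>R partial g (axis i 1) y)"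
    by (simp add: fun_eq_iff drift_def)
  moreover have "Ck k (\<lambda>y. S$i$j * y$j)" for i j
    by (intro Ck_linear bounded_linear_mult_right bounded_linear_compose[OF _ bounded_linear_vec_nth])
  ultimately show ?thesis
    using assms by (simp add: Ck_sum Ck_bilinear[OF bounded_bilinear_scaleR])
qed

lemma partial_laplacian:
  fixes g :: "real^'d \<Rightarrow> real^'m"
  assumes "Ck 3 g"
  shows "partial (laplacian g) (axis j 1) x = laplacian (partial g (axis j 1)) x"
proof -
  let ?e = "\<lambda>i. axis i (1::real)"
  have C2: "Ck 2 g" "Ck 2 (partial g (?e i))" for i
    using assms by (simp_all add: numeral_3_eq_3 numeral_2_eq_2)
  have "partial (laplacian g) (?e j) x = (\<Sum>i\<in>UNIV. partial (partial (partial g (?e i)) (?e i)) (?e j) x)"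
    unfolding laplacian_def using assms
    by (intro partial_sum) (simp add: numeral_3_eq_3)
  also have "\<dots> = (\<Sum>i\<in>UNIV. partial (partial (partial g (?e j)) (?e i)) (?e i) x)"
  proof (rule sum.cong[OF refl])
    fix i
    have "partial (partial (partial g (?e i)) (?e i)) (?e j) = partial (partial (partial g (?e i)) (?e j)) (?e i)"
      by (simp add: Ck2_partial_commute[OF C2(2)])
    also have "partial (partial g (?e i)) (?e j) = partial (partial g (?e j)) (?e i)"
      by (simp add: Ck2_partial_commute[OF C2(1)])
    finally show "partial (partial (partial g (?e i)) (?e i)) (?e j) x
        = partial (partial (partial g (?e j)) (?e i)) (?e i) x" by simp
  qed
  finally show ?thesis
    unfolding laplacian_def .
qed

lemma partial_drift:
  fixes g :: "real^'d \<Rightarrow> real^'m"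
  assumes "Ck 2 g"
  shows "partial (drift S g) (axis j 1) x
    = drift S (partial g (axis j 1)) x + (\<Sum>k\<in>UNIV. S$k$j *\<^sub>R partial g (axis k 1) x)"
proof -
  let ?e = "\<lambda>i. axis i (1::real)"
  have dg: "partial g (?e k) differentiable (at y)" for k y
    using assms by (simp add: numeral_2_eq_2)
  have coord: "bounded_linear (\<lambda>y::real^'d. S$k$l * y$l)" for k l
    by (intro bounded_linear_mult_right bounded_linear_compose[OF _ bounded_linear_vec_nth])
  have dterm: "(\<lambda>y. (S$k$l * y$l) *\<^sub>R partial g (?e k) y) differentiable (at y)" for k l y
    using coord by (intro differentiable_scaleR bounded_linear_imp_differentiable dg)
  have "partial (drift S g) (?e j) x
      = (\<Sum>k\<in>UNIV. \<Sum>l\<in>UNIV. partial (\<lambda>y. (S$k$l * y$l) *\<^sub>R partial g (?e k) y) (?e j) x)"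
    unfolding drift_def using dterm by (simp add: partial_sum)
  also have "\<dots> = (\<Sum>k\<in>UNIV. \<Sum>l\<in>UNIV. (S$k$l * ?e j $ l) *\<^sub>R partial g (?e k) x
      + (S$k$l * x$l) *\<^sub>R partial (partial g (?e k)) (?e j) x)"
  proof (intro sum.cong refl)
    fix k l
    show "partial (\<lambda>y. (S$k$l * y$l) *\<^sub>R partial g (?e k) y) (?e j) x
        = (S$k$l * ?e j $ l) *\<^sub>R partial g (?e k) x + (S$k$l * x$l) *\<^sub>R partial (partial g (?e k)) (?e j) x"
      using partial_bilinear[OF bounded_bilinear_scaleR bounded_linear_imp_differentiable[OF coord] dg]
      by (simp add: partial_linear[OF coord])
  qed
  also have "\<dots> = (\<Sum>k\<in>UNIV. S$k$j *\<^sub>R partial g (?e k) x)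
      + (\<Sum>k\<in>UNIV. \<Sum>l\<in>UNIV. (S$k$l * x$l) *\<^sub>R partial (partial g (?e j)) (?e k) x)"
  proof -
    have "(\<Sum>l\<in>UNIV. (S$k$l * ?e j $ l) *\<^sub>R v) = (\<Sum>l\<in>UNIV. if l = j then S$k$j *\<^sub>R v else 0)"
      for k and v :: "real^'m"
      by (intro sum.cong) (auto simp: axis_def)
    then show ?thesis
      by (simp add: sum.distrib Ck2_partial_commute[OF assms])
  qed
  finally show ?thesis
    by (simp add: drift_def add.commute)
qed

lemma laplacian_sum:
  fixes g :: "'j \<Rightarrow> real^'d \<Rightarrow> 'b::real_normed_vector"
  assumes "\<And>j. j \<in> J \<Longrightarrow> Ck 2 (g j)"
  shows "laplacian (\<lambda>y. \<Sum>j\<in>J. g j y) x = (\<Sum>j\<in>J. laplacian (g j) x)"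
proof -
  have d: "g j differentiable (at y)" if "j \<in> J" for j y
    using assms[OF that] by (simp add: numeral_2_eq_2)
  have d': "partial (g j) e differentiable (at y)" if "j \<in> J" "e \<in> Basis" for j e y
    using assms[OF that(1)] that(2) by (simp add: numeral_2_eq_2)
  have "partial (\<lambda>y. \<Sum>j\<in>J. g j y) (axis i 1) = (\<lambda>y. \<Sum>j\<in>J. partial (g j) (axis i 1) y)" for i
    using d by (simp add: fun_eq_iff partial_sum)
  then show ?thesis
    using d' by (simp add: laplacian_def partial_sum sum.swap[of _ UNIV J])
qed

lemma drift_sum:
  fixes g :: "'j \<Rightarrow> real^'d \<Rightarrow> 'b::real_normed_vector"
  assumes "finite J" and "\<And>j. j \<in> J \<Longrightarrow> g j differentiable (at x)"
  shows "drift S (\<lambda>y. \<Sum>j\<in>J. g j y) x = (\<Sum>j\<in>J. drift S (g j) x)"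
  using assms by (simp add: drift_eq_partial partial_sum differentiable_sum)

lemma laplacian_bilinear_affine:
  fixes prod :: "'b::real_normed_vector \<Rightarrow> 'c::real_normed_vector \<Rightarrow> 'e::real_normed_vector"
    and L :: "real^'d \<Rightarrow> 'b" and h :: "real^'d \<Rightarrow> 'c"
  assumes prod: "bounded_bilinear prod" and L: "bounded_linear L" and h: "Ck 2 h"
  shows "laplacian (\<lambda>y. prod (L y + c) (h y)) x
    = prod (L x + c) (laplacian h x) + 2 *\<^sub>R (\<Sum>i\<in>UNIV. prod (L (axis i 1)) (partial h (axis i 1) x))"
proof -
  have dL: "(\<lambda>y. L y + c) differentiable (at y)" for y
    by (intro differentiable_add bounded_linear_imp_differentiable[OF L] differentiable_const)
  have dh: "h differentiable (at y)" for y
    using h by (simp add: numeral_2_eq_2)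
  have dh': "partial h e differentiable (at y)" if "e \<in> Basis" for e y
    using h that by (simp add: numeral_2_eq_2)
  have first: "partial (\<lambda>y. prod (L y + c) (h y)) e = (\<lambda>y. prod (L e) (h y) + prod (L y + c) (partial h e y))" for e
    using dL dh by (simp add: fun_eq_iff partial_bilinear[OF prod] partial_affine[OF L])
  have second: "partial (partial (\<lambda>y. prod (L y + c) (h y)) e) e x
      = prod (L x + c) (partial (partial h e) e x) + 2 *\<^sub>R prod (L e) (partial h e x)" if "e \<in> Basis" for e
  proof -
    note lin = bounded_bilinear.bounded_linear_right[OF prod, of "L e"]
    have "partial (partial (\<lambda>y. prod (L y + c) (h y)) e) e x
        = partial (\<lambda>y. prod (L e) (h y)) e x + partial (\<lambda>y. prod (L y + c) (partial h e y)) e x"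
      unfolding first
      by (intro partial_add differentiable_bounded_linear[OF lin dh]
          differentiable_bilinear[OF prod dL dh'[OF that]])
    also have "\<dots> = prod (L e) (partial h e x)
        + (prod (L e) (partial h e x) + prod (L x + c) (partial (partial h e) e x))"
      by (simp add: partial_bounded_linear[OF lin dh] partial_bilinear[OF prod dL dh'[OF that]]
          partial_affine[OF L])
    finally show ?thesis by (simp add: scaleR_2)
  qed
  show ?thesis
    by (simp add: laplacian_def second sum.distrib scaleR_sum_right bounded_bilinear.sum_right[OF prod])
qed

lemma drift_bilinear_affine:
  fixes prod :: "'b::real_normed_vector \<Rightarrow> 'c::real_normed_vector \<Rightarrow> 'e::real_normed_vector"
    and L :: "real^'d \<Rightarrow> 'b" and h :: "real^'d \<Rightarrow> 'c"
  assumes prod: "bounded_bilinear prod" and L: "bounded_linear L" and h: "h differentiable (at x)"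
  shows "drift S (\<lambda>y. prod (L y + c) (h y)) x = prod (L (S *v x)) (h x) + prod (L x + c) (drift S h x)"
proof -
  have dL: "(\<lambda>y. L y + c) differentiable (at x)"
    by (intro differentiable_add bounded_linear_imp_differentiable[OF L] differentiable_const)
  show ?thesis
    using dL h by (simp add: drift_eq_partial differentiable_bilinear[OF prod] partial_bilinear[OF prod]
        partial_affine[OF L])
qed

section \<open>The equation for the derivatives of the wave\<close>

text \<open>The right-hand side comes from differentiating the coefficient \<open>S x\<close> of the drift.\<close>
lemma linearized_equation_partial:
  fixes A :: "real^'m^'m" and S :: "real^'d^'d" and f :: "real^'m \<Rightarrow> real^'m"
    and vs :: "real^'d \<Rightarrow> real^'m"
  assumes f_C1: "Ck 1 f" and vs_C3: "Ck 3 vs"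
    and vs_sol: "\<forall>x. A *v laplacian vs x + drift S vs x + f (vs x) = 0"
  shows "A *v laplacian (partial vs (axis j 1)) x + drift S (partial vs (axis j 1)) x
      + frechet_derivative f (at (vs x)) (partial vs (axis j 1) x)
    = - (\<Sum>k\<in>UNIV. S$k$j *\<^sub>R partial vs (axis k 1) x)"
proof -
  let ?e = "axis j (1::real)"
  have "Ck 2 vs" using vs_C3 Ck_Suc_imp_Ck by (simp add: numeral_3_eq_3 numeral_2_eq_2)
  have d_lap: "laplacian vs differentiable (at x)"
    using Ck_laplacian[of 1 vs] vs_C3 by (simp add: numeral_3_eq_3)
  have d_drift: "drift S vs differentiable (at x)"
    using Ck_drift[of 1 vs S] \<open>Ck 2 vs\<close> by (simp add: numeral_2_eq_2)
  have d_vs: "vs differentiable (at x)" and d_f: "f differentiable (at (vs x))"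
    using vs_C3 f_C1 by (simp_all add: numeral_3_eq_3)
  have d_fvs: "(\<lambda>y. f (vs y)) differentiable (at x)"
    using differentiable_chain_at[OF d_vs d_f] by (simp add: o_def)
  have "(\<lambda>y. A *v laplacian vs y + drift S vs y + f (vs y)) = (\<lambda>y. 0)"
    using vs_sol by simp
  then have "0 = partial (\<lambda>y. A *v laplacian vs y + drift S vs y + f (vs y)) ?e x"
    using partial_eqI[OF has_derivative_const] by metis
  also have "\<dots> = A *v partial (laplacian vs) ?e x + partial (drift S vs) ?e x
      + frechet_derivative f (at (vs x)) (partial vs ?e x)"
    using d_lap d_drift d_fvs
    by (simp add: partial_add differentiable_add differentiable_bounded_linear
        partial_bounded_linear partial_compose[OF d_vs d_f])
  finally show ?thesis
    using partial_laplacian[OF vs_C3] partial_drift[OF \<open>Ck 2 vs\<close>]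
    by (simp add: algebra_simps eq_neg_iff_add_eq_0)
qed

lemma bounded_linear_cvec: "bounded_linear (cvec :: real^'n \<Rightarrow> complex^'n)"
  unfolding linear_conv_bounded_linear[symmetric]
  by (intro linearI) (simp_all add: cvec_def vec_eq_iff scaleR_conv_of_real[where 'a=complex])

lemma bounded_bilinear_scale_cvec:
  "bounded_bilinear (\<lambda>(c::complex) (z::real^'n). c *s cvec z)"
  unfolding bilinear_conv_bounded_bilinear[symmetric] bilinear_def
  by (auto intro!: linearI simp: cvec_def vec_eq_iff scaleR_conv_of_real[where 'a=complex] algebra_simps)

lemma cmat_mult_cvec: "cmat M *v cvec z = cvec (M *v z)"
  by (simp add: vec_eq_iff cmat_def cvec_def matrix_vector_mult_def)

lemma cmat_mult_sum_scaled_cvec: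
  "cmat M *v (\<Sum>j\<in>J. c j *s cvec (z j)) = (\<Sum>j\<in>J. c j *s cvec (M *v z j))"
  by (simp add: vec.sum vector_scalar_commute cmat_mult_cvec)

lemma mat_mult_vector: "mat c *v y = c *s (y :: 'a::comm_ring_1^'n)"
proof -
  have "(\<Sum>j\<in>UNIV. (if i = j then c else 0) * y $ j) = (\<Sum>j\<in>UNIV. if i = j then c * y $ j else 0)" for i
    by (rule sum.cong) auto
  then show ?thesis
    by (simp add: vec_eq_iff matrix_vector_mult_def mat_def)
qed

lemma jac_mult:
  assumes "g differentiable (at y)"
  shows "jac g y *v z = frechet_derivative g (at y) z"
proof -
  have "linear (frechet_derivative g (at y))"
    using assms frechet_derivative_works has_derivative_linear by blast
  have "frechet_derivative g (at y) z = frechet_derivative g (at y) (\<Sum>k\<in>UNIV. z $ k *\<^sub>R axis k 1)"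
    using basis_expansion[of z] by (simp add: scalar_mult_eq_scaleR)
  also have "\<dots> = (\<Sum>k\<in>UNIV. z $ k *\<^sub>R frechet_derivative g (at y) (axis k 1))"
    using \<open>linear _\<close> by (simp add: linear_sum linear_scale)
  finally show ?thesis
    by (simp add: vec_eq_iff jac_def matrix_vector_mult_def sum_component mult.commute)
qed

lemma sum_skew_symmetric_scale_zero:
  fixes E :: "complex^'d^'d" and H :: "'d \<Rightarrow> 'd \<Rightarrow> real^'m"
  assumes E: "transpose E = - E" and H: "\<And>i j. H i j = H j i"
  shows "(\<Sum>j\<in>UNIV. \<Sum>i\<in>UNIV. E$j$i *s cvec (H j i)) = 0"
proof -
  let ?X = "\<Sum>j\<in>UNIV. \<Sum>i\<in>UNIV. E$j$i *s cvec (H j i)"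
  have skew: "E$j$i = - E$i$j" for i j
    using arg_cong[OF E, of "\<lambda>M. M$i$j"] by (simp add: transpose_def)
  have swap: "E$j$i *s cvec (H j i) = - (E$i$j *s cvec (H i j))" for i j
    by (simp add: vec_eq_iff H[of j i] skew[of i j])
  have "?X = (\<Sum>i\<in>UNIV. \<Sum>j\<in>UNIV. E$j$i *s cvec (H j i))"
    by (rule sum.swap)
  also have "\<dots> = (\<Sum>i\<in>UNIV. \<Sum>j\<in>UNIV. - (E$i$j *s cvec (H i j)))"
    by (intro sum.cong refl swap)
  also have "\<dots> = - ?X"
    by (simp add: sum_negf)
  finally have "2 *\<^sub>R ?X = 0"
    by (simp only: scaleR_2 eq_neg_iff_add_eq_0)
  then show ?thesis by simp
qed

lemma sum_scaled_cvec_transfer: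
  fixes p :: "'d::finite \<Rightarrow> real^'m" and a :: "complex^'d" and S :: "real^'d^'d"
  shows "(\<Sum>j\<in>UNIV. a$j *s cvec (\<Sum>k\<in>UNIV. S$k$j *\<^sub>R p k)) = (\<Sum>k\<in>UNIV. (cmat S *v a)$k *s cvec (p k))"
proof (rule iffD2[OF vec_eq_iff], rule allI)
  fix i
  have "(\<Sum>j\<in>UNIV. a$j *s cvec (\<Sum>k\<in>UNIV. S$k$j *\<^sub>R p k)) $ i
      = (\<Sum>j\<in>UNIV. \<Sum>k\<in>UNIV. of_real (S$k$j) * a$j * of_real (p k $ i))"
    by (simp add: cvec_def sum_component sum_distrib_left mult_ac)
  also have "\<dots> = (\<Sum>k\<in>UNIV. \<Sum>j\<in>UNIV. of_real (S$k$j) * a$j * of_real (p k $ i))"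
    by (rule sum.swap)
  also have "\<dots> = (\<Sum>k\<in>UNIV. (cmat S *v a)$k *s cvec (p k)) $ i"
    by (simp add: cvec_def cmat_def matrix_vector_mult_def sum_component sum_distrib_right)
  finally show "(\<Sum>j\<in>UNIV. a$j *s cvec (\<Sum>k\<in>UNIV. S$k$j *\<^sub>R p k)) $ i
      = (\<Sum>k\<in>UNIV. (cmat S *v a)$k *s cvec (p k)) $ i" .
qed

lemma sum_scaled_cvec_eigen_identity:
  fixes p t :: "'d::finite \<Rightarrow> real^'m" and a q :: "complex^'d" and S :: "real^'d^'d"
  assumes t: "\<And>j. t j = - (\<Sum>k\<in>UNIV. S$k$j *\<^sub>R p k)" and q: "q - cmat S *v a = lam *s a"
  shows "(\<Sum>j\<in>UNIV. a$j *s cvec (t j)) + (\<Sum>j\<in>UNIV. q$j *s cvec (p j))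
    = lam *s (\<Sum>j\<in>UNIV. a$j *s cvec (p j))"
proof -
  have "a$j *s cvec (t j) = - (a$j *s cvec (\<Sum>k\<in>UNIV. S$k$j *\<^sub>R p k))" for j
    unfolding t by (simp add: vec_eq_iff cvec_def)
  then have "(\<Sum>j\<in>UNIV. a$j *s cvec (t j)) = - (\<Sum>k\<in>UNIV. (cmat S *v a)$k *s cvec (p k))"
    by (simp add: sum_scaled_cvec_transfer[symmetric] sum_negf)
  then have "(\<Sum>j\<in>UNIV. a$j *s cvec (t j)) + (\<Sum>j\<in>UNIV. q$j *s cvec (p j))
      = (\<Sum>k\<in>UNIV. (q - cmat S *v a)$k *s cvec (p k))"
    by (simp add: sum_subtractf vector_sub_rdistrib)
  also have "\<dots> = lam *s (\<Sum>j\<in>UNIV. a$j *s cvec (p j))"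
    by (simp add: q vec_eq_iff sum_component sum_distrib_left mult_ac)
  finally show ?thesis .
qed

section \<open>Eigenfunctions built from the derivative of the wave\<close>

lemma vfun_eq_sum:
  "vfun vs E b y = (\<Sum>j\<in>UNIV. ((E *v cvec y) $ j + b $ j) *s cvec (partial vs (axis j 1) y))"
  by (simp add: vec_eq_iff vfun_def cmat_def jac_def cvec_def matrix_vector_mult_def partial_def
      sum_component distrib_left mult_ac)

lemma matrix_cvec_axis: "(E *v cvec (axis i 1)) $ j = E $ j $ i"
proof -
  have "(\<Sum>k\<in>UNIV. E$j$k * cvec (axis i 1) $ k) = (\<Sum>k\<in>UNIV. if k = i then E$j$i else 0)"
    by (rule sum.cong) (auto simp: cvec_def axis_def)
  then show ?thesis
    by (simp add: matrix_vector_mult_def)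
qed

lemma bounded_linear_cvec_component: "bounded_linear (\<lambda>y. (E *v cvec y) $ j)"
  using bounded_linear_compose[OF bounded_linear_vec_nth
      bounded_linear_compose[OF matrix_vector_mul_bounded_linear bounded_linear_cvec]] .

lemma Ck_vfun_term:
  assumes "Ck k h"
  shows "Ck k (\<lambda>y. ((E *v cvec y) $ j + c) *s cvec (h y))"
  by (rule Ck_bilinear[OF bounded_bilinear_scale_cvec
        Ck_add[OF Ck_linear[OF bounded_linear_cvec_component] Ck_const] assms])

lemma Ck_vfun:
  assumes "Ck (Suc k) vs"
  shows "Ck k (vfun vs E b)"
proof -
  have "Ck k (partial vs (axis j 1))" for j
    using assms by simp
  then show ?thesis
    unfolding vfun_eq_sum[abs_def] by (intro Ck_sum Ck_vfun_term) simp_all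
qed

text \<open>The cross term \<open>\<Sum>\<^sub>j\<^sub>k E\<^sub>j\<^sub>k \<partial>\<^sub>j \<partial>\<^sub>k v\<^sub>\<star>\<close> vanishes because \<open>E\<close> is skew and the Hessian symmetric.\<close>
lemma laplacian_vfun:
  assumes vs_C3: "Ck 3 vs" and E_skew: "transpose E = - E"
  shows "laplacian (vfun vs E b) x
    = (\<Sum>j\<in>UNIV. (E *v cvec x + b) $ j *s cvec (laplacian (partial vs (axis j 1)) x))"
proof -
  let ?P = "\<lambda>j. partial vs (axis j 1)"
  have vs_C2: "Ck 2 vs"
    using Ck_Suc_imp_Ck[of 2 vs] vs_C3 by (simp add: numeral_3_eq_3)
  have P_C2: "Ck 2 (?P j)" for j
    using vs_C3 by (simp add: numeral_3_eq_3 numeral_2_eq_2)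
  have "laplacian (vfun vs E b) x
      = (\<Sum>j\<in>UNIV. laplacian (\<lambda>y. ((E *v cvec y) $ j + b$j) *s cvec (?P j y)) x)"
    unfolding vfun_eq_sum[abs_def] using P_C2 by (intro laplacian_sum Ck_vfun_term)
  also have "\<dots> = (\<Sum>j\<in>UNIV. ((E *v cvec x) $ j + b$j) *s cvec (laplacian (?P j) x)
      + 2 *\<^sub>R (\<Sum>i\<in>UNIV. (E *v cvec (axis i 1)) $ j *s cvec (partial (?P j) (axis i 1) x)))"
    by (intro sum.cong refl laplacian_bilinear_affine[OF bounded_bilinear_scale_cvec
          bounded_linear_cvec_component P_C2])
  also have "\<dots> = (\<Sum>j\<in>UNIV. (E *v cvec x + b) $ j *s cvec (laplacian (?P j) x))
      + 2 *\<^sub>R (\<Sum>j\<in>UNIV. \<Sum>i\<in>UNIV. E$j$i *s cvec (partial (?P j) (axis i 1) x))"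
    by (simp add: sum.distrib scaleR_sum_right matrix_cvec_axis)
  also have "(\<Sum>j\<in>UNIV. \<Sum>i\<in>UNIV. E$j$i *s cvec (partial (?P j) (axis i 1) x)) = 0"
    using Ck2_partial_commute[OF vs_C2] by (intro sum_skew_symmetric_scale_zero E_skew) simp
  finally show ?thesis by simp
qed

lemma drift_vfun:
  assumes vs_C2: "Ck 2 vs"
  shows "drift S (vfun vs E b) x
    = (\<Sum>j\<in>UNIV. (E *v cvec (S *v x)) $ j *s cvec (partial vs (axis j 1) x))
      + (\<Sum>j\<in>UNIV. (E *v cvec x + b) $ j *s cvec (drift S (partial vs (axis j 1)) x))"
proof -
  let ?P = "\<lambda>j. partial vs (axis j 1)"
  have dP: "?P j differentiable (at y)" for j y
    using vs_C2 by (simp add: numeral_2_eq_2)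
  have "drift S (vfun vs E b) x = (\<Sum>j\<in>UNIV. drift S (\<lambda>y. ((E *v cvec y) $ j + b$j) *s cvec (?P j y)) x)"
    unfolding vfun_eq_sum[abs_def]
    by (intro drift_sum differentiable_bilinear[OF bounded_bilinear_scale_cvec] dP
        differentiable_add bounded_linear_imp_differentiable[OF bounded_linear_cvec_component]) simp_all
  also have "\<dots> = (\<Sum>j\<in>UNIV. (E *v cvec (S *v x)) $ j *s cvec (?P j x)
      + ((E *v cvec x) $ j + b$j) *s cvec (drift S (?P j) x))"
    by (intro sum.cong refl drift_bilinear_affine[OF bounded_bilinear_scale_cvec
          bounded_linear_cvec_component dP])
  finally show ?thesis
    by (simp add: sum.distrib)
qed

text \<open>With \<open>v = \<Sum>\<^sub>j (Ex + b)\<^sub>j \<partial>\<^sub>j v\<^sub>\<star>\<close>, the equations for the \<open>\<partial>\<^sub>j v\<^sub>\<star>\<close> give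
  \<open>\<L>v = Dv\<^sub>\<star>(E S x - S (E x + b))\<close>.\<close>
theorem classical_eig_solution_vfun:
  fixes A :: "real^'m^'m" and S :: "real^'d^'d" and f :: "real^'m \<Rightarrow> real^'m"
    and vs :: "real^'d \<Rightarrow> real^'m" and E :: "complex^'d^'d" and b :: "complex^'d"
  assumes f_C1: "Ck 1 f" and vs_C3: "Ck 3 vs"
    and vs_sol: "\<forall>x. A *v laplacian vs x + drift S vs x + f (vs x) = 0"
    and E_skew: "transpose E = - E"
    and E_comm: "E ** cmat S - cmat S ** E = mat lam ** E"
    and b_eig: "cmat S *v b = - lam *s b"
  shows "classical_eig_solution A S f vs lam (vfun vs E b)"
proof -
  let ?P = "\<lambda>j. partial vs (axis j 1)"
  have "lam *s vfun vs E b x - Lop A S f vs (vfun vs E b) x = 0" for x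
  proof -
    let ?a = "E *v cvec x + b" and ?q = "E *v cvec (S *v x)"
    have eq: "A *v laplacian (?P j) x + drift S (?P j) x + jac f (vs x) *v ?P j x
        = - (\<Sum>k\<in>UNIV. S$k$j *\<^sub>R ?P k x)" for j
      using linearized_equation_partial[OF f_C1 vs_C3 vs_sol] f_C1 by (simp add: jac_mult)
    have "?q - cmat S *v ?a = (E ** cmat S - cmat S ** E) *v cvec x - cmat S *v b"
      by (simp add: cmat_mult_cvec[symmetric] matrix_vector_mul_assoc algebra_simps)
    also have "\<dots> = lam *s ?a"
      by (simp add: E_comm b_eig matrix_vector_mul_assoc[symmetric] mat_mult_vector vector_add_ldistrib)
    finally have comm: "?q - cmat S *v ?a = lam *s ?a" .
    have v_x: "vfun vs E b x = (\<Sum>j\<in>UNIV. ?a$j *s cvec (?P j x))"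
      by (simp add: vfun_eq_sum)
    have "Lop A S f vs (vfun vs E b) x
        = (\<Sum>j\<in>UNIV. ?a$j *s cvec (A *v laplacian (?P j) x))
          + ((\<Sum>j\<in>UNIV. ?q$j *s cvec (?P j x)) + (\<Sum>j\<in>UNIV. ?a$j *s cvec (drift S (?P j) x)))
          + (\<Sum>j\<in>UNIV. ?a$j *s cvec (jac f (vs x) *v ?P j x))"
      using Ck_Suc_imp_Ck[of 2 vs] vs_C3
      by (simp only: Lop_def laplacian_vfun[OF vs_C3 E_skew] drift_vfun v_x cmat_mult_sum_scaled_cvec
          numeral_3_eq_3 numeral_2_eq_2)
    also have "\<dots> = (\<Sum>j\<in>UNIV. ?a$j *s cvec (A *v laplacian (?P j) x + drift S (?P j) x + jac f (vs x) *v ?P j x))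
          + (\<Sum>j\<in>UNIV. ?q$j *s cvec (?P j x))"
      by (simp add: linear_add[OF bounded_linear.linear[OF bounded_linear_cvec]] vector_add_ldistrib
          sum.distrib add_ac)
    also have "\<dots> = lam *s vfun vs E b x"
      unfolding v_x by (rule sum_scaled_cvec_eigen_identity[OF eq comm])
    finally show ?thesis by simp
  qed
  moreover have "Ck 2 (vfun vs E b)"
    using Ck_vfun[of 2 vs] vs_C3 by (simp add: numeral_3_eq_3)
  ultimately show ?thesis
    unfolding classical_eig_solution_def by blast
qed

section \<open>Spectral data of the rotation generator\<close>

lemma transpose_cmat: "transpose (cmat M) = cmat (transpose M)"
  by (simp add: vec_eq_iff transpose_def cmat_def)

lemma cmat_uminus: "cmat (- M) = - cmat M"
  by (simp add: vec_eq_iff cmat_def)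

lemma matrix_mul_rneg: "A ** (- B) = - (A ** (B :: 'a::ring_1^'n^'m))"
  by (simp add: vec_eq_iff matrix_matrix_mult_def sum_negf)

lemma matrix_mul_lneg: "(- A) ** B = - (A ** (B :: 'a::ring_1^'n^'m))"
  by (simp add: vec_eq_iff matrix_matrix_mult_def sum_negf)

lemma mat_mult_eq: "mat c ** M = (\<chi> a b. c * M$a$b)"
proof -
  have "(\<Sum>k\<in>UNIV. (if a = k then c else 0) * M$k$b) = (\<Sum>k\<in>UNIV. if k = a then c * M$a$b else 0)" for a b
    by (rule sum.cong) auto
  then show ?thesis
    by (simp add: vec_eq_iff matrix_matrix_mult_def mat_def)
qed

lemma mat_mult_commute: "mat c ** M = M ** mat (c :: 'a::comm_ring_1)"
proof -
  have "(\<Sum>k\<in>UNIV. M$a$k * (if k = b then c else 0)) = (\<Sum>k\<in>UNIV. if k = b then c * M$a$b else 0)" for a b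
    by (rule sum.cong) (auto simp: mult.commute)
  then have "M ** mat c = (\<chi> a b. c * M$a$b)"
    by (simp add: vec_eq_iff matrix_matrix_mult_def mat_def)
  then show ?thesis
    by (simp add: mat_mult_eq)
qed

lemma diag_anticommutator: "M ** diag l + diag l ** M = (\<chi> a b. (l a + l b) * M$a$b)"
proof -
  have "(\<Sum>k\<in>UNIV. M$a$k * (if k = b then l k else 0)) = M$a$b * l b"
    and "(\<Sum>k\<in>UNIV. (if a = k then l a else 0) * M$k$b) = l a * M$a$b" for a b
    by (simp_all add: if_distrib[of "\<lambda>u. M$a$_ * u"] if_distrib[of "\<lambda>u. u * M$_$b"] cong: if_cong)
  then show ?thesis
    by (simp add: vec_eq_iff matrix_matrix_mult_def diag_def algebra_simps)
qed

lemma Imat_commutator_diag: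
  "(Imat i j - Imat j i) ** diag l + diag l ** (Imat i j - Imat j i) = mat (l i + l j) ** (Imat i j - Imat j i)"
  unfolding diag_anticommutator mat_mult_eq
  by (auto simp: vec_eq_iff Imat_def add.commute)

lemma diag_mult_vector: "diag l *v y = (\<chi> a. l a * y$a)"
proof -
  have "(\<Sum>k\<in>UNIV. (if a = k then l a else 0) * y$k) = (\<Sum>k\<in>UNIV. if k = a then l a * y$a else 0)" for a
    by (rule sum.cong) auto
  then show ?thesis
    by (simp add: vec_eq_iff matrix_vector_mult_def diag_def)
qed

lemma diag_mult_axis: "diag l *v axis k 1 = l k *s axis k 1"
  by (simp add: diag_mult_vector vec_eq_iff axis_def)

lemma matrix_add_rdistrib: "(A + B) ** C = A ** C + B ** (C :: 'a::semiring_1^'n^'m)"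
  by (simp add: vec_eq_iff matrix_matrix_mult_def sum.distrib distrib_right)

lemma transpose_diag: "transpose (diag l) = diag l"
  by (simp add: vec_eq_iff transpose_def diag_def)

lemma mat_uminus: "mat (- c) = - mat (c :: 'a::ring_1)"
  by (simp add: vec_eq_iff mat_def)

lemma transpose_diff: "transpose (A - B) = transpose A - transpose (B :: 'a::ab_group_add^'n^'m)"
  by (simp add: vec_eq_iff transpose_def)

lemma transpose_Imat: "transpose (Imat i j) = Imat j i"
  by (auto simp: vec_eq_iff transpose_def Imat_def)

lemma cmat_mult_unitary_diag:
  assumes U_unitary: "unitary U" and U_diag: "ctranspose U ** cmat S ** U = diag lamS"
  shows "cmat S ** U = U ** diag lamS"
proof -
  have "U ** ctranspose U = mat 1"
    using U_unitary unfolding unitary_def by (simp add: matrix_left_right_inverse)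
  then have "cmat S ** U = U ** (ctranspose U ** cmat S ** U)"
    by (simp add: matrix_mul_assoc)
  then show ?thesis by (simp add: U_diag)
qed

text \<open>Transposing \<open>S U = U \<Lambda>\<close> gives \<open>U\<^sup>T S = - \<Lambda> U\<^sup>T\<close> because \<open>S\<close> is real and skew; this is
  why \<open>E\<close> is built with \<open>U\<^sup>T\<close> rather than \<open>U\<^sup>H\<close>.\<close>
lemma Imat_conjugate_commutator:
  fixes S :: "real^'d^'d" and U :: "complex^'d^'d" and i j :: 'd
  assumes S_skew: "skew_symmetric S" and SU: "cmat S ** U = U ** diag lamS"
  defines "E \<equiv> U ** (Imat i j - Imat j i) ** transpose U"
  shows "E ** cmat S - cmat S ** E = mat (- (lamS i + lamS j)) ** E"
proof -
  let ?K = "Imat i j - Imat j i" and ?D = "diag lamS" and ?T = "transpose U"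
  have "transpose (cmat S ** U) = transpose (U ** ?D)"
    using SU by simp
  then have "- (?T ** cmat S) = ?D ** ?T"
    using S_skew by (simp add: matrix_transpose_mul transpose_cmat skew_symmetric_def cmat_uminus
        matrix_mul_rneg transpose_diag)
  then have TS: "M ** ?T ** cmat S = - (M ** ?D ** ?T)" for M
    by (metis matrix_mul_assoc matrix_mul_rneg minus_minus)
  have "E ** cmat S - cmat S ** E = - (U ** ?K ** ?D ** ?T) - U ** ?D ** ?K ** ?T"
    unfolding E_def by (simp add: TS matrix_mul_assoc SU)
  also have "\<dots> = - (U ** (?K ** ?D + ?D ** ?K) ** ?T)"
    by (simp add: matrix_add_ldistrib matrix_add_rdistrib matrix_mul_assoc)
  also have "\<dots> = - (U ** mat (lamS i + lamS j) ** ?K ** ?T)"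
    by (simp add: Imat_commutator_diag matrix_mul_assoc)
  also have "\<dots> = mat (- (lamS i + lamS j)) ** E"
    unfolding E_def mat_uminus by (simp add: mat_mult_commute[symmetric] matrix_mul_lneg matrix_mul_assoc)
  finally show ?thesis .
qed

lemma Imat_conjugate_skew:
  "transpose (U ** (Imat i j - Imat j i) ** transpose U) = - (U ** (Imat i j - Imat j i) ** transpose U)"
proof -
  have K: "transpose (Imat i j - Imat j i) = - (Imat i j - Imat j i)"
    by (simp add: transpose_diff transpose_Imat)
  have "transpose (U ** (Imat i j - Imat j i) ** transpose U)
      = U ** transpose (Imat i j - Imat j i) ** transpose U"
    by (simp only: matrix_transpose_mul transpose_transpose matrix_mul_assoc)
  also have "\<dots> = - (U ** (Imat i j - Imat j i) ** transpose U)"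
    by (simp only: K matrix_mul_rneg matrix_mul_lneg)
  finally show ?thesis .
qed

lemma diag_entry_imaginary:
  fixes S :: "real^'d^'d" and U :: "complex^'d^'d"
  assumes S_skew: "skew_symmetric S" and U_diag: "ctranspose U ** cmat S ** U = diag lamS"
  shows "Re (lamS l) = 0"
proof -
  define T where "T a b = cnj (U$a$l) * of_real (S$a$b) * U$b$l" for a b
  have lam: "lamS l = (\<Sum>a\<in>UNIV. \<Sum>b\<in>UNIV. T a b)"
  proof -
    have "lamS l = (ctranspose U ** cmat S ** U) $ l $ l"
      by (simp add: U_diag diag_def)
    also have "\<dots> = (\<Sum>b\<in>UNIV. \<Sum>a\<in>UNIV. T a b)"
      by (simp add: matrix_matrix_mult_def ctranspose_def cmat_def sum_distrib_right T_def)
    also have "\<dots> = (\<Sum>a\<in>UNIV. \<Sum>b\<in>UNIV. T a b)"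
      by (rule sum.swap)
    finally show ?thesis .
  qed
  have skew: "S$b$a = - S$a$b" for a b
    using arg_cong[OF S_skew[unfolded skew_symmetric_def], of "\<lambda>M. M$a$b"] by (simp add: transpose_def)
  have cnj_T: "cnj (T a b) = - T b a" for a b
    unfolding T_def by (simp add: skew[of a b] mult_ac)
  have "cnj (lamS l) = (\<Sum>a\<in>UNIV. \<Sum>b\<in>UNIV. - T b a)"
    unfolding lam by (simp only: cnj_sum cnj_T)
  also have "\<dots> = - (\<Sum>b\<in>UNIV. \<Sum>a\<in>UNIV. T b a)"
    by (subst sum.swap) (simp add: sum_negf)
  finally have "cnj (lamS l) = - lamS l"
    by (simp add: lam)
  then have "Re (cnj (lamS l)) = Re (- lamS l)"
    by (rule arg_cong)
  then show ?thesis
    by simp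
qed

theorem theorem2p3:
  fixes A :: "real^'m^'m" and f :: "real^'m \<Rightarrow> real^'m"
    and S :: "real^('d::{finite,linorder})^('d::{finite,linorder})" and U :: "complex^('d::{finite,linorder})^('d::{finite,linorder})"
    and lamS :: "('d::{finite,linorder}) \<Rightarrow> complex"
    and vs :: "real^('d::{finite,linorder}) \<Rightarrow> real^'m"
  assumes d2: "CARD(('d::{finite,linorder})) \<ge> 2"
    and f_C1: "Ck 1 f"
    and S_skew: "skew_symmetric S"
    and U_unitary: "unitary U"
    and U_diag: "ctranspose U ** cmat S ** U = diag lamS"
    and vs_C3: "Ck 3 vs"
    and vs_sol: "\<forall>x. A *v laplacian vs x + drift S vs x + f (vs x) = 0"
  shows "(\<forall>l. classical_eig_solution A S f vs (- lamS l) (vfun vs 0 (U *v axis l 1))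
              \<and> Re (- lamS l) = 0)
       \<and> (\<forall>i j. i < j \<longrightarrow>
            classical_eig_solution A S f vs (- (lamS i + lamS j))
               (vfun vs (U ** (Imat i j - Imat j i) ** transpose U) 0)
            \<and> Re (- (lamS i + lamS j)) = 0)"
proof -
  have SU: "cmat S ** U = U ** diag lamS"
    using cmat_mult_unitary_diag[OF U_unitary U_diag] .
  have eigenvector: "cmat S *v (U *v axis l 1) = lamS l *s (U *v axis l 1)" for l
  proof -
    have "cmat S *v (U *v axis l 1) = U *v (diag lamS *v axis l 1)"
      by (simp add: matrix_vector_mul_assoc SU)
    then show ?thesis
      by (simp add: diag_mult_axis vector_scalar_commute)
  qed
  have "classical_eig_solution A S f vs (- lamS l) (vfun vs 0 (U *v axis l 1))" for l
    using eigenvector by (intro classical_eig_solution_vfun[OF f_C1 vs_C3 vs_sol])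
      (simp_all add: vec_eq_iff transpose_def)
  moreover have "classical_eig_solution A S f vs (- (lamS i + lamS j))
      (vfun vs (U ** (Imat i j - Imat j i) ** transpose U) 0)" for i j
    by (intro classical_eig_solution_vfun[OF f_C1 vs_C3 vs_sol Imat_conjugate_skew
          Imat_conjugate_commutator[OF S_skew SU]]) simp
  ultimately show ?thesis
    using diag_entry_imaginary[OF S_skew U_diag] by simp
qed

end
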